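(* Let $\mathcal P$ and $\mathrm{conv}(\mathcal P)$ be as in the context. Let $\alpha,\beta,s_{\max}$ be integers such that (a) $L\le s_{\max}\le\min\{T-2,\lfloor(\overline C-\overline V)/V\rfloor\}$, (b) $0\le\alpha<\beta\le s_{\max}$, and (c) $\beta=\alpha+1$ or $s_{\max}\le L+\alpha$. Let $\mathcal S=[0,\alpha]_{\mathbb Z}\cup[\beta,s_{\max}]_{\mathbb Z}$. For any $t\in[s_{\max}+2,T]_{\mathbb Z}$, the inequality $$x_t\le\overline C y_t-\sum_{s\in\mathcal S}(\overline C-\overline V-sV)(y_{t-s}-y_{t-s-1})$$ is valid and facet-defining for $\mathrm{conv}(\mathcal P)$. For any $t\in[1,T-s_{\max}-1]_{\mathbb Z}$, the inequality $$x_t\le\overline C y_t-\sum_{s\in\mathcal S}(\overline C-\overline V-sV)(y_{t+s}-y_{t+s+1})$$ is valid and facet-defining for $\mathrm{conv}(\mathcal P)$.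
   Context: For integers $a,b$, $[a,b]_{\mathbb Z}=\{a,a+1,\dots,b\}$ if $a\le b$ and $\emptyset$ otherwise. Fix a positive integer $T$, positive integers $L$ (minimum up time) and $\ell$ (minimum down time), and reals $\overline C,\underline C,V,\overline V$ with $\overline C>\underline C>0$, $V>0$, $\overline V+V\le\overline C$ and $\underline C<\overline V<\underline C+V$. $\mathcal P$ is the set of $(\mathbf x,\mathbf y)=((x_1,\dots,x_T),(y_1,\dots,y_T))\in\mathbb R_+^T\times\{0,1\}^T$ satisfying: (i) $-y_{t-1}+y_t-y_k\le 0$ for all $t\in[2,T]_{\mathbb Z}$, $k\in[t,\min\{T,t+L-1\}]_{\mathbb Z}$; (ii) $y_{t-1}-y_t+y_k\le 1$ for all $t\in[2,T]_{\mathbb Z}$, $k\in[t,\min\{T,t+\ell-1\}]_{\mathbb Z}$; (iii) $-x_t+\underline C y_t\le 0$ and $x_t-\overline C y_t\le 0$ for all $t\in[1,T]_{\mathbb Z}$; (iv) $x_t-x_{t-1}\le Vy_{t-1}+\overline V(1-y_{t-1})$ for all $t\in[2,T]_{\mathbb Z}$; (v) $x_{t-1}-x_t\le Vy_t+\overline V(1-y_t)$ for all $t\in[2,T]_{\mathbb Z}$. $\mathrm{conv}(\mathcal P)\subseteq\mathbb R^{2T}$ is its convex hull. A linear inequality is valid for $\mathrm{conv}(\mathcal P)$ if all its points satisfy it, and facet-defining if moreover the set of points of $\mathrm{conv}(\mathcal P)$ satisfying it with equality has dimension $\dim\mathrm{conv}(\mathcal P)-1$. *)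

theory Defs
  imports "HOL-Analysis.Analysis" "HOL-Library.Function_Algebras"
begin

instantiation "fun" :: (type, real_vector) real_vector
begin
definition scaleR_fun :: "real \<Rightarrow> ('a \<Rightarrow> 'b) \<Rightarrow> 'a \<Rightarrow> 'b" where
  "scaleR_fun r f = (\<lambda>x. r *\<^sub>R f x)"
instance by standard (auto simp: scaleR_fun_def fun_eq_iff scaleR_add_right scaleR_add_left)
end

text \<open>A point of R^(2T) is a pair (x, y) of functions on the index set nat, with
  x t = y t = 0 for t outside [1,T].\<close>
type_synonym pt = "(nat \<Rightarrow> real) \<times> (nat \<Rightarrow> real)"

definition inP :: "nat \<Rightarrow> nat \<Rightarrow> nat \<Rightarrow> real \<Rightarrow> real \<Rightarrow> real \<Rightarrow> real \<Rightarrow> pt \<Rightarrow> bool" where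
  "inP T L l Cb Cu V Vb p \<longleftrightarrow>
     (let x = fst p; y = snd p in
       (\<forall>t. t \<notin> {1..T} \<longrightarrow> x t = 0 \<and> y t = 0) \<and>
       (\<forall>t\<in>{1..T}. x t \<ge> 0 \<and> (y t = 0 \<or> y t = 1)) \<and>
       (\<forall>t\<in>{2..T}. \<forall>k\<in>{t..min T (t + L - 1)}. - y (t - 1) + y t - y k \<le> 0) \<and>
       (\<forall>t\<in>{2..T}. \<forall>k\<in>{t..min T (t + l - 1)}. y (t - 1) - y t + y k \<le> 1) \<and>
       (\<forall>t\<in>{1..T}. - x t + Cu * y t \<le> 0 \<and> x t - Cb * y t \<le> 0) \<and>
       (\<forall>t\<in>{2..T}. x t - x (t - 1) \<le> V * y (t - 1) + Vb * (1 - y (t - 1))) \<and>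
       (\<forall>t\<in>{2..T}. x (t - 1) - x t \<le> V * y t + Vb * (1 - y t)))"

definition Pset :: "nat \<Rightarrow> nat \<Rightarrow> nat \<Rightarrow> real \<Rightarrow> real \<Rightarrow> real \<Rightarrow> real \<Rightarrow> pt set" where
  "Pset T L l Cb Cu V Vb = {p. inP T L l Cb Cu V Vb p}"

definition affdim :: "'a::real_vector set \<Rightarrow> int" where
  "affdim S = (if S = {} then -1 else int (dim {a - b | a b. a \<in> S \<and> b \<in> S}))"

definition valid_ineq :: "'a::real_vector set \<Rightarrow> ('a \<Rightarrow> real) \<Rightarrow> ('a \<Rightarrow> real) \<Rightarrow> bool" where
  "valid_ineq K lhs rhs \<longleftrightarrow> (\<forall>p\<in>K. lhs p \<le> rhs p)"

definition facet_defining :: "'a::real_vector set \<Rightarrow> ('a \<Rightarrow> real) \<Rightarrow> ('a \<Rightarrow> real) \<Rightarrow> bool" where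
  "facet_defining K lhs rhs \<longleftrightarrow> valid_ineq K lhs rhs \<and>
     affdim {p\<in>K. lhs p = rhs p} = affdim K - 1"

end

theory Submission
  imports Defs
begin

text \<open>
  Read the commitment variables backwards from \<open>t\<close>. If the unit is on at \<open>t\<close> and
  its last start-up was \<open>r \<le> smax\<close> periods earlier, the ramp-up limits give
  \<open>x\<^sub>t \<le> Vb + rV = Cb - (Cb - Vb - rV)\<close>, which pays for the term of that start-up. Further back,
  start-ups and shut-downs alternate, each start-up at least \<open>L\<close> periods before the next
  shut-down, and condition (c) makes every such pair contribute a nonpositive amount.

  The face contains \<open>0\<close> and explicit schedules (always on with a single dip, late
  start-ups, start-ups exactly \<open>s \<in> S\<close> periods before \<open>t\<close> ramping up at full speed, early
  shut-downs); together with the unit vector of \<open>x\<^sub>t\<close> they span the whole space.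

  The second family is the image of the first under the time reversal \<open>t \<mapsto> T + 1 - t\<close>,
  which maps \<open>P\<close> onto itself.
\<close>

section \<open>Affine dimension\<close>

lemma span_differences:
  fixes S :: "'a::real_vector set"
  assumes "0 \<in> S"
  shows "span {a - b |a b. a \<in> S \<and> b \<in> S} = span S"
  unfolding real_vector.span_eq
proof (intro conjI subsetI)
  fix d assume "d \<in> {a - b |a b. a \<in> S \<and> b \<in> S}"
  then show "d \<in> span S"
    by (auto intro: real_vector.span_diff real_vector.span_base)
next
  fix a assume "a \<in> S"
  then have "a - 0 \<in> {a - b |a b. a \<in> S \<and> b \<in> S}"
    using assms by blast
  then show "a \<in> span {a - b |a b. a \<in> S \<and> b \<in> S}"
    by (simp add: real_vector.span_base)
qed

lemma affdim_eq_dim: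
  fixes S :: "'a::real_vector set"
  assumes "0 \<in> S"
  shows "affdim S = int (dim S)"
  using assms real_vector.span_eq_dim[OF span_differences[OF assms]]
  by (auto simp: affdim_def)

lemma dim_insert_notin_span:
  fixes S W :: "'a::real_vector set"
  assumes "finite W" "S \<subseteq> span W" "x \<notin> span S"
  shows "dim (insert x S) = Suc (dim S)"
proof -
  obtain B where B: "B \<subseteq> S" "S \<subseteq> span B" "independent B"
    by (metis real_vector.maximal_independent_subset)
  have "B \<subseteq> span W"
    using B(1) assms(2) by (rule order_trans)
  then have "finite B"
    using real_vector.independent_span_bound[OF assms(1) B(3)] by simp
  have "span B \<subseteq> span S"
    using B(1) by (rule real_vector.span_mono)
  then have "x \<notin> span B"
    using assms(3) by blast
  then have "x \<notin> B"
    using real_vector.span_superset[of B] by blast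
  have "dim S = card B"
    by (rule real_vector.dim_unique[OF B]) simp
  moreover have "dim (insert x S) = card (insert x B)"
  proof (rule real_vector.dim_unique)
    show "insert x B \<subseteq> insert x S"
      using B(1) by blast
    have "span B \<subseteq> span (insert x B)"
      by (rule real_vector.span_mono) blast
    moreover have "x \<in> span (insert x B)"
      by (rule real_vector.span_base) simp
    ultimately show "insert x S \<subseteq> span (insert x B)"
      using B(2) by blast
    show "independent (insert x B)"
      using B(3) \<open>x \<notin> span B\<close> \<open>x \<notin> B\<close> by (simp add: real_vector.independent_insert)
  qed simp
  ultimately show ?thesis
    using \<open>finite B\<close> \<open>x \<notin> B\<close> by simp
qed

lemma affdim_codim_one:
  fixes F K W :: "'a::real_vector set"
  assumes "0 \<in> F" "F \<subseteq> K" "finite W" "K \<subseteq> span W"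
    and "v \<in> span K" "v \<notin> span F" "K \<subseteq> span (insert v F)"
  shows "affdim F = affdim K - 1"
proof -
  have "span K = span (insert v F)"
    using assms(2,5,7) real_vector.span_superset[of K]
    by (auto simp: real_vector.span_eq)
  then have "dim K = dim (insert v F)"
    by (rule real_vector.span_eq_dim)
  also have "\<dots> = Suc (dim F)"
    using assms(2,4) by (intro dim_insert_notin_span[OF assms(3) _ assms(6)]) auto
  finally show ?thesis
    using affdim_eq_dim[of F] affdim_eq_dim[of K] assms(1,2) by auto
qed

lemma dim_injective_linear_image:
  fixes f :: "'a::real_vector \<Rightarrow> 'b::real_vector"
  assumes "linear f" "inj f"
  shows "dim (f ` S) = dim S"
proof -
  obtain B where B: "B \<subseteq> S" "S \<subseteq> span B" "independent B"
    by (metis real_vector.maximal_independent_subset)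
  have "dim S = card B"
    by (rule real_vector.dim_unique[OF B]) simp
  moreover have "dim (f ` S) = card (f ` B)"
  proof (rule real_vector.dim_unique)
    show "f ` B \<subseteq> f ` S"
      using B(1) by blast
    show "f ` S \<subseteq> span (f ` B)"
      using B(2) by (auto simp: real_vector.linear_span_image[OF assms(1)])
    show "independent (f ` B)"
      using real_vector.linear_independent_injective_image[OF assms(1) B(3)] assms(2)
      by (simp add: inj_on_subset)
  qed simp
  ultimately show ?thesis
    using assms(2) by (simp add: card_image inj_on_subset)
qed

lemma affdim_injective_linear_image:
  fixes f :: "'a::real_vector \<Rightarrow> 'b::real_vector"
  assumes "linear f" "inj f"
  shows "affdim (f ` S) = affdim S"
proof -
  have "{a - b |a b. a \<in> f ` S \<and> b \<in> f ` S} = f ` {a - b |a b. a \<in> S \<and> b \<in> S}"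
  proof (intro equalityI subsetI)
    fix d assume "d \<in> {a - b |a b. a \<in> f ` S \<and> b \<in> f ` S}"
    then obtain a b where "a \<in> S" "b \<in> S" "d = f (a - b)"
      by (auto simp: real_vector.linear_diff[OF assms(1)])
    then show "d \<in> f ` {a - b |a b. a \<in> S \<and> b \<in> S}"
      by blast
  next
    fix d assume "d \<in> f ` {a - b |a b. a \<in> S \<and> b \<in> S}"
    then obtain a b where "a \<in> S" "b \<in> S" "d = f a - f b"
      by (auto simp: real_vector.linear_diff[OF assms(1)])
    then show "d \<in> {a - b |a b. a \<in> f ` S \<and> b \<in> f ` S}"
      by blast
  qed
  then show ?thesis
    using dim_injective_linear_image[OF assms] by (simp add: affdim_def)
qed

lemma valid_ineq_convex_hull:
  assumes "linear (\<lambda>p. lhs p - rhs p)" "\<And>p. p \<in> A \<Longrightarrow> lhs p \<le> rhs p"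
  shows "valid_ineq (convex hull A) lhs rhs"
proof -
  have "convex hull A \<subseteq> (\<lambda>p. lhs p - rhs p) -` {..0}"
    using assms by (intro hull_minimal convex_linear_vimage convex_real_interval) auto
  then show ?thesis
    by (auto simp: valid_ineq_def)
qed

lemma facet_defining_linear_involution:
  fixes R :: "'a::real_vector \<Rightarrow> 'a"
  assumes "linear R" "\<And>p. R (R p) = p" "R ` K = K" "facet_defining K lhs rhs"
  shows "facet_defining K (\<lambda>p. lhs (R p)) (\<lambda>p. rhs (R p))"
proof -
  have "inj R"
    by (metis assms(2) injI)
  have RK: "R p \<in> K \<longleftrightarrow> p \<in> K" for p
    using assms(2,3) by (metis image_iff)
  have "{p \<in> K. lhs (R p) = rhs (R p)} = R ` {p \<in> K. lhs p = rhs p}"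
  proof (intro equalityI subsetI)
    fix p assume "p \<in> {p \<in> K. lhs (R p) = rhs (R p)}"
    then have "R p \<in> {p \<in> K. lhs p = rhs p}"
      using RK by simp
    then show "p \<in> R ` {p \<in> K. lhs p = rhs p}"
      using assms(2) by (metis image_eqI)
  next
    fix q assume "q \<in> R ` {p \<in> K. lhs p = rhs p}"
    then obtain p where "p \<in> K" "lhs p = rhs p" "q = R p"
      by blast
    then show "q \<in> {p \<in> K. lhs (R p) = rhs (R p)}"
      using RK assms(2) by simp
  qed
  moreover have "valid_ineq K (\<lambda>p. lhs (R p)) (\<lambda>p. rhs (R p))"
    using assms(4) RK by (simp add: facet_defining_def valid_ineq_def)
  ultimately show ?thesis
    using assms(4) affdim_injective_linear_image[OF assms(1) \<open>inj R\<close>]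
    by (simp add: facet_defining_def)
qed

section \<open>Coordinates on the horizon\<close>

lemma sum_fun_apply: "(\<Sum>i\<in>A. f i) x = (\<Sum>i\<in>A. f i x :: 'b::comm_monoid_add)"
  by (induction A rule: infinite_finite_induct) auto

definition ind :: "nat \<Rightarrow> nat \<Rightarrow> nat \<Rightarrow> real" where
  "ind a b i = (if i \<in> {a..b} then 1 else 0)"

lemma ind_same: "ind i i k = (if k = i then 1 else 0)"
  by (auto simp: ind_def)

lemma ind_increment:
  assumes "1 \<le> u" "a \<le> Suc b"
  shows "ind a b u - ind a b (u - 1) = (if u = a then 1 else 0) - (if u = Suc b then 1 else 0)"
  using assms unfolding ind_def by auto

lemma sum_ind_increments:
  fixes w :: "nat \<Rightarrow> real"
  assumes "finite S" "\<forall>s\<in>S. s < t" "a \<le> Suc b"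
  shows "(\<Sum>s\<in>S. w s * (ind a b (t - s) - ind a b (t - s - 1))) =
    (if a \<le> t \<and> t - a \<in> S then w (t - a) else 0) - (if b < t \<and> t - Suc b \<in> S then w (t - Suc b) else 0)"
proof -
  have "w s * (ind a b (t - s) - ind a b (t - s - 1)) =
      (if a \<le> t \<and> s = t - a then w s else 0) - (if b < t \<and> s = t - Suc b then w s else 0)"
    if "s \<in> S" for s
  proof -
    have "s < t"
      using assms(2) that by blast
    then have "t - s = a \<longleftrightarrow> a \<le> t \<and> s = t - a" "t - s = Suc b \<longleftrightarrow> b < t \<and> s = t - Suc b"
      by auto
    then show ?thesis
      using ind_increment[of "t - s" a b] \<open>s < t\<close> assms(3) by (simp add: right_diff_distrib)
  qed
  then have "(\<Sum>s\<in>S. w s * (ind a b (t - s) - ind a b (t - s - 1))) =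
      (\<Sum>s\<in>S. if a \<le> t \<and> s = t - a then w s else 0) - (\<Sum>s\<in>S. if b < t \<and> s = t - Suc b then w s else 0)"
    by (simp add: sum_subtractf)
  also have "\<dots> = (if a \<le> t \<and> t - a \<in> S then w (t - a) else 0) - (if b < t \<and> t - Suc b \<in> S then w (t - Suc b) else 0)"
    by (cases "a \<le> t"; cases "b < t") (simp_all add: assms(1))
  finally show ?thesis .
qed

definition horizon :: "nat \<Rightarrow> pt set" where
  "horizon T = {p. \<forall>k. k \<notin> {1..T} \<longrightarrow> fst p k = 0 \<and> snd p k = 0}"

lemma subspace_horizon: "subspace (horizon T)"
  unfolding subspace_def horizon_def by (auto simp: scaleR_fun_def)

lemma sum_ind_expansion:
  assumes "\<And>k. k \<notin> {1..T} \<Longrightarrow> f k = 0"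
  shows "(\<Sum>i\<in>{1..T}. f i *\<^sub>R ind i i) = f"
proof
  fix k
  show "(\<Sum>i\<in>{1..T}. f i *\<^sub>R ind i i) k = f k"
    using assms[of k] by (auto simp: sum_fun_apply scaleR_fun_def ind_same if_distrib[of "\<lambda>z. _ * z"] cong: if_cong)
qed

lemma linear_fst_embedding: "linear (\<lambda>f. (f, 0 :: nat \<Rightarrow> real))"
  by (rule linearI) auto

lemma linear_snd_embedding: "linear (\<lambda>f. (0 :: nat \<Rightarrow> real, f))"
  by (rule linearI) auto

lemma embedding_in_subspace:
  fixes e :: "(nat \<Rightarrow> real) \<Rightarrow> 'a::real_vector"
  assumes "linear e" "subspace U" "\<And>i. i \<in> {1..T} \<Longrightarrow> e (ind i i) \<in> U"
    and "\<And>k. k \<notin> {1..T} \<Longrightarrow> f k = 0"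
  shows "e f \<in> U"
proof -
  have "e f = e (\<Sum>i\<in>{1..T}. f i *\<^sub>R ind i i)"
    using sum_ind_expansion[of T f] assms(4) by simp
  also have "\<dots> = (\<Sum>i\<in>{1..T}. f i *\<^sub>R e (ind i i))"
    by (simp add: real_vector.linear_sum[OF assms(1)] real_vector.linear_scale[OF assms(1)])
  also have "\<dots> \<in> U"
    using assms(2,3) by (intro real_vector.subspace_sum real_vector.subspace_scale) auto
  finally show ?thesis .
qed

lemma horizon_subset_subspace:
  assumes "subspace U"
    and "\<And>i. i \<in> {1..T} \<Longrightarrow> (ind i i, 0) \<in> U" "\<And>i. i \<in> {1..T} \<Longrightarrow> (0, ind i i) \<in> U"
  shows "horizon T \<subseteq> U"
proof
  fix p assume "p \<in> horizon T"
  then have "(fst p, 0) \<in> U" "(0, snd p) \<in> U"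
    by (auto simp: horizon_def intro: embedding_in_subspace[OF linear_fst_embedding assms(1,2)]
        embedding_in_subspace[OF linear_snd_embedding assms(1,3)])
  then have "(fst p, 0) + (0, snd p) \<in> U"
    by (rule real_vector.subspace_add[OF assms(1)])
  then show "p \<in> U"
    by simp
qed

lemma snd_part_in_subspace:
  assumes "subspace U" "\<And>i. i \<in> {1..T} \<Longrightarrow> (ind i i, 0) \<in> U" "p \<in> U" "p \<in> horizon T"
  shows "(0, snd p) \<in> U"
proof -
  have "(fst p, 0) \<in> U"
    using assms(4) by (auto simp: horizon_def intro: embedding_in_subspace[OF linear_fst_embedding assms(1,2)])
  then have "p - (fst p, 0) \<in> U"
    by (rule real_vector.subspace_diff[OF assms(1) assms(3)])
  moreover have "p - (fst p, 0) = (0, snd p)"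
    by (simp add: prod_eq_iff)
  ultimately show ?thesis
    by simp
qed

lemma horizon_subset_span_units:
  "horizon T \<subseteq> span ((\<lambda>i. (ind i i, 0)) ` {1..T} \<union> (\<lambda>i. (0, ind i i)) ` {1..T})"
  by (rule horizon_subset_subspace[OF real_vector.subspace_span]) (simp_all add: real_vector.span_base)

section \<open>Time reversal\<close>

lemma inPD:
  assumes "inP T L l Cb Cu V Vb p"
  shows "\<And>t. t \<notin> {1..T} \<Longrightarrow> fst p t = 0 \<and> snd p t = 0"
    and "\<And>t. t \<in> {1..T} \<Longrightarrow> 0 \<le> fst p t \<and> (snd p t = 0 \<or> snd p t = 1)"
    and "\<And>t k. t \<in> {2..T} \<Longrightarrow> k \<in> {t..min T (t + L - 1)} \<Longrightarrow> - snd p (t - 1) + snd p t - snd p k \<le> 0"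
    and "\<And>t k. t \<in> {2..T} \<Longrightarrow> k \<in> {t..min T (t + l - 1)} \<Longrightarrow> snd p (t - 1) - snd p t + snd p k \<le> 1"
    and "\<And>t. t \<in> {1..T} \<Longrightarrow> Cu * snd p t \<le> fst p t \<and> fst p t \<le> Cb * snd p t"
    and "\<And>t. t \<in> {2..T} \<Longrightarrow> fst p t - fst p (t - 1) \<le> V * snd p (t - 1) + Vb * (1 - snd p (t - 1))"
    and "\<And>t. t \<in> {2..T} \<Longrightarrow> fst p (t - 1) - fst p t \<le> V * snd p t + Vb * (1 - snd p t)"
  using assms unfolding inP_def Let_def by auto

definition reflect :: "nat \<Rightarrow> nat \<Rightarrow> nat" where
  "reflect T t = (if t \<in> {1..T} then T + 1 - t else t)"

definition reflect_pt :: "nat \<Rightarrow> pt \<Rightarrow> pt" where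
  "reflect_pt T p = (fst p \<circ> reflect T, snd p \<circ> reflect T)"

lemma reflect_involution [simp]: "reflect T (reflect T t) = t"
  unfolding reflect_def by (cases "1 \<le> t"; cases "t \<le> T") auto

lemma reflect_pt_involution [simp]: "reflect_pt T (reflect_pt T p) = p"
  by (simp add: reflect_pt_def comp_def)

lemma linear_reflect_pt: "linear (reflect_pt T)"
  by (rule linearI) (auto simp: reflect_pt_def scaleR_fun_def)

lemma reflect_in_horizon: "t \<in> {1..T} \<Longrightarrow> reflect T t \<in> {1..T}"
  by (auto simp: reflect_def)

lemma reflect_outside_horizon: "t \<notin> {1..T} \<Longrightarrow> reflect T t = t"
  unfolding reflect_def by presburger

lemma reflect_step:
  assumes "t \<in> {2..T}"
  shows "reflect T t = T + 1 - t" "reflect T (t - 1) = Suc (T + 1 - t)" "Suc (T + 1 - t) \<in> {2..T}"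
  using assms by (auto simp: reflect_def)

definition min_up_time :: "nat \<Rightarrow> nat \<Rightarrow> (nat \<Rightarrow> real) \<Rightarrow> bool" where
  "min_up_time T L y \<longleftrightarrow> (\<forall>t\<in>{2..T}. \<forall>k\<in>{t..min T (t + L - 1)}. - y (t - 1) + y t - y k \<le> 0)"

lemma ex_switch_on:
  assumes "\<not> P v" "P u" "v \<le> u"
  shows "\<exists>w. v \<le> w \<and> w < u \<and> \<not> P w \<and> P (Suc w)"
  using assms
proof (induction u)
  case (Suc u)
  then have "v \<le> u"
    by (metis le_Suc_eq)
  then show ?case
    using Suc by (cases "P u") (auto intro: less_SucI)
qed simp

text \<open>
  A violation after reversal is a shut-down preceded by fewer than \<open>L\<close> on-periods; the last
  switch-on before it violates the original condition.
\<close>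

lemma min_up_time_reflect:
  assumes binary: "\<And>t. t \<in> {1..T} \<Longrightarrow> y t = 0 \<or> y t = 1" and up: "min_up_time T L y"
  shows "min_up_time T L (y \<circ> reflect T)"
  unfolding min_up_time_def
proof (intro ballI)
  fix t k assume t: "t \<in> {2..T}" and k: "k \<in> {t..min T (t + L - 1)}"
  define u where "u = T + 1 - t"
  define v where "v = T + 1 - k"
  have refl: "reflect T (t - 1) = Suc u" "reflect T t = u" "reflect T k = v"
    using t k by (auto simp: reflect_def u_def v_def)
  have uv: "1 \<le> v" "v \<le> u" "Suc u \<le> T" "Suc u \<le> v + L"
    using t k by (auto simp: u_def v_def)
  show "- (y \<circ> reflect T) (t - 1) + (y \<circ> reflect T) t - (y \<circ> reflect T) k \<le> 0"
  proof (rule ccontr)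
    assume "\<not> ?thesis"
    then have "- y (Suc u) + y u - y v > 0"
      using refl by simp
    moreover have "y (Suc u) \<in> {0, 1}" "y u \<in> {0, 1}" "y v \<in> {0, 1}"
      using binary uv by auto
    ultimately have y: "y (Suc u) = 0" "y u = 1" "y v = 0"
      by auto
    then obtain w where w: "v \<le> w" "w < u" "y w \<noteq> 1" "y (Suc w) = 1"
      using ex_switch_on[of "\<lambda>j. y j = 1" v u] uv by auto
    then have "y w = 0"
      using binary[of w] uv by auto
    have "Suc w \<in> {2..T}" "Suc u \<in> {Suc w..min T (Suc w + L - 1)}"
      using w uv by auto
    then have "- y (Suc w - 1) + y (Suc w) - y (Suc u) \<le> 0"
      using up unfolding min_up_time_def by blast
    then show False
      using y w \<open>y w = 0\<close> by simp
  qed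
qed

lemma min_up_time_complement:
  "min_up_time T l (\<lambda>i. 1 - y i) \<longleftrightarrow> (\<forall>t\<in>{2..T}. \<forall>k\<in>{t..min T (t + l - 1)}. y (t - 1) - y t + y k \<le> 1)"
  by (simp add: min_up_time_def le_diff_eq)

lemma inP_reflect_pt:
  assumes p: "inP T L l Cb Cu V Vb p"
  shows "inP T L l Cb Cu V Vb (reflect_pt T p)"
proof -
  define x where "x = fst p"
  define y where "y = snd p"
  note P = inPD[OF p, folded x_def y_def]
  have binary: "\<And>t. t \<in> {1..T} \<Longrightarrow> y t = 0 \<or> y t = 1"
    using P(2) by blast
  have "min_up_time T L (y \<circ> reflect T)"
    using P(3) by (intro min_up_time_reflect binary) (auto simp: min_up_time_def)
  moreover have "min_up_time T l ((\<lambda>i. 1 - y i) \<circ> reflect T)"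
    using P(4) binary by (intro min_up_time_reflect) (auto simp: min_up_time_complement)
  moreover have "x (reflect T t) - x (reflect T (t - 1)) \<le> V * y (reflect T (t - 1)) + Vb * (1 - y (reflect T (t - 1)))"
      "x (reflect T (t - 1)) - x (reflect T t) \<le> V * y (reflect T t) + Vb * (1 - y (reflect T t))"
    if "t \<in> {2..T}" for t
    using P(6,7)[OF reflect_step(3)[OF that]] reflect_step[OF that] by simp_all
  moreover have "0 \<le> x (reflect T t) \<and> (y (reflect T t) = 0 \<or> y (reflect T t) = 1) \<and>
      Cu * y (reflect T t) \<le> x (reflect T t) \<and> x (reflect T t) \<le> Cb * y (reflect T t)"
    if "t \<in> {1..T}" for t
    using P(2,5) reflect_in_horizon[OF that] by blast
  ultimately show ?thesis
    unfolding inP_def Let_def reflect_pt_def fst_conv snd_conv x_def[symmetric] y_def[symmetric]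
    using P(1) reflect_outside_horizon
    by (auto simp: min_up_time_def[of T L] comp_def min_up_time_complement[of T l "\<lambda>i. y (reflect T i)"])
qed

section \<open>Weighted switching sums\<close>

text \<open>
  Read backwards in time, \<open>Y s - Y (Suc s)\<close> is \<open>1\<close> at a start-up and \<open>-1\<close> at a shut-down.
  By induction from the far end, a tail beginning in an off-period is nonpositive, and a tail
  beginning inside a run of on-periods is bounded by any nonnegative \<open>M\<close> bounding \<open>cc\<close> at the start-up
  that opens the run.
\<close>

lemma switch_tail_le:
  fixes Y cc :: "nat \<Rightarrow> real" and n k :: nat
  assumes binary: "\<And>s. s \<le> Suc n \<Longrightarrow> Y s = 0 \<or> Y s = 1"
    and cc_nonneg: "\<And>s. s \<le> n \<Longrightarrow> 0 \<le> cc s"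
    and cc_run: "\<And>\<rho> r. \<rho> < r \<Longrightarrow> r \<le> n \<Longrightarrow> Y \<rho> = 0 \<Longrightarrow> \<forall>j\<in>{\<rho><..r}. Y j = 1 \<Longrightarrow> Y (Suc r) = 0
      \<Longrightarrow> cc r \<le> cc \<rho>"
    and "k \<le> Suc n"
  shows "(Y k = 0 \<longrightarrow> (\<Sum>s\<in>{k..n}. cc s * (Y s - Y (Suc s))) \<le> 0) \<and>
    (\<forall>M. Y k = 1 \<longrightarrow> (\<forall>r. k \<le> r \<longrightarrow> r \<le> n \<longrightarrow> (\<forall>j\<in>{k..r}. Y j = 1) \<longrightarrow> Y (Suc r) = 0 \<longrightarrow> cc r \<le> M)
      \<longrightarrow> 0 \<le> M \<longrightarrow> (\<Sum>s\<in>{k..n}. cc s * (Y s - Y (Suc s))) \<le> M)"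
  using assms(4)
proof (induction k rule: inc_induct)
  case (step k)
  have tail: "(\<Sum>s\<in>{k..n}. cc s * (Y s - Y (Suc s)))
      = cc k * (Y k - Y (Suc k)) + (\<Sum>s\<in>{Suc k..n}. cc s * (Y s - Y (Suc s)))"
    using step(2) by (simp add: sum.atLeast_Suc_atMost)
  consider "Y (Suc k) = 0" | "Y (Suc k) = 1"
    using binary[of "Suc k"] step(2) by auto
  then show ?case
  proof cases
    case 1
    then show ?thesis
      using step(2,3) tail by auto
  next
    case 2
    have "\<forall>r. Suc k \<le> r \<longrightarrow> r \<le> n \<longrightarrow> (\<forall>j\<in>{Suc k..r}. Y j = 1) \<longrightarrow> Y (Suc r) = 0 \<longrightarrow> cc r \<le> cc k"
      if "Y k = 0"
      using cc_run[of k] that by (auto simp: atLeastSucAtMost_greaterThanAtMost)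
    moreover have "\<forall>r. Suc k \<le> r \<longrightarrow> r \<le> n \<longrightarrow> (\<forall>j\<in>{Suc k..r}. Y j = 1) \<longrightarrow> Y (Suc r) = 0 \<longrightarrow> cc r \<le> M"
      if "Y k = 1" "\<forall>r. k \<le> r \<longrightarrow> r \<le> n \<longrightarrow> (\<forall>j\<in>{k..r}. Y j = 1) \<longrightarrow> Y (Suc r) = 0 \<longrightarrow> cc r \<le> M" for M
      using that by (auto simp: Icc_eq_insert_lb_nat)
    ultimately show ?thesis
      using step(2,3) tail 2 cc_nonneg[of k] by auto
  qed
qed simp

lemma switch_sum_le:
  fixes Y cc :: "nat \<Rightarrow> real" and n :: nat and B :: real
  assumes "\<And>s. s \<le> Suc n \<Longrightarrow> Y s = 0 \<or> Y s = 1"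
    and "\<And>s. s \<le> n \<Longrightarrow> 0 \<le> cc s"
    and "\<And>\<rho> r. \<rho> < r \<Longrightarrow> r \<le> n \<Longrightarrow> Y \<rho> = 0 \<Longrightarrow> \<forall>j\<in>{\<rho><..r}. Y j = 1 \<Longrightarrow> Y (Suc r) = 0
      \<Longrightarrow> cc r \<le> cc \<rho>"
    and "0 \<le> B"
    and "\<And>r. r \<le> n \<Longrightarrow> \<forall>j\<in>{0..r}. Y j = 1 \<Longrightarrow> Y (Suc r) = 0 \<Longrightarrow> cc r \<le> B"
  shows "(\<Sum>s\<in>{0..n}. cc s * (Y s - Y (Suc s))) \<le> B"
proof -
  note tail = switch_tail_le[where Y = Y and cc = cc and n = n and k = 0, OF assms(1-3) le0]
  consider "Y 0 = 0" | "Y 0 = 1"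
    using assms(1)[of 0] by auto
  then show ?thesis
  proof cases
    case 1
    then have "(\<Sum>s\<in>{0..n}. cc s * (Y s - Y (Suc s))) \<le> 0"
      using tail by blast
    then show ?thesis
      using assms(4) by linarith
  next
    case 2
    have "\<forall>r. 0 \<le> r \<longrightarrow> r \<le> n \<longrightarrow> (\<forall>j\<in>{0..r}. Y j = 1) \<longrightarrow> Y (Suc r) = 0 \<longrightarrow> cc r \<le> B"
      using assms(5) by blast
    with 2 show ?thesis
      using tail[THEN conjunct2, rule_format, of B] assms(4) by blast
  qed
qed

section \<open>Feasible schedules\<close>

locale unit_commitment =
  fixes T L l :: nat and Cb Cu V Vb :: real
  assumes Cu_pos: "0 < Cu" and Cu_less_Vb: "Cu < Vb" and V_pos: "0 < V"
    and Cu_less_Cb: "Cu < Cb" and Vb_V_le_Cb: "Vb + V \<le> Cb"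
begin

abbreviation feasible :: "pt \<Rightarrow> bool" where
  "feasible \<equiv> inP T L l Cb Cu V Vb"

abbreviation conv_P :: "pt set" where
  "conv_P \<equiv> convex hull Pset T L l Cb Cu V Vb"

text \<open>
  Schedules that are on during a single interval touching an end of the horizon satisfy the
  minimum up- and down-time constraints trivially.
\<close>

lemma block_feasible:
  assumes "1 \<le> a" "b \<le> T" "a = 1 \<or> b = T"
    and outside: "\<And>i. i \<notin> {a..b} \<Longrightarrow> x i = 0"
    and range: "\<And>i. i \<in> {a..b} \<Longrightarrow> Cu \<le> x i \<and> x i \<le> Cb"
    and step: "\<And>i. i \<in> {a<..b} \<Longrightarrow> \<bar>x i - x (i - 1)\<bar> \<le> V"
    and start: "2 \<le> a \<Longrightarrow> x a \<le> Vb"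
    and stop: "b < T \<Longrightarrow> x b \<le> Vb"
  shows "feasible (x, ind a b)"
proof -
  have x_nonneg: "0 \<le> x i" for i
    using outside[of i] range[of i] Cu_pos by (cases "i \<in> {a..b}") auto
  have ramps: "x t - x (t - 1) \<le> V * ind a b (t - 1) + Vb * (1 - ind a b (t - 1)) \<and>
      x (t - 1) - x t \<le> V * ind a b t + Vb * (1 - ind a b t)" if "t \<in> {2..T}" for t
  proof (cases "t - 1 \<in> {a..b}"; cases "t \<in> {a..b}")
    assume "t - 1 \<in> {a..b}" "t \<in> {a..b}"
    then show ?thesis
      using step[of t] that by (auto simp: ind_def abs_le_iff)
  next
    assume "t - 1 \<in> {a..b}" "t \<notin> {a..b}"
    then have "t - 1 = b" "b < T"
      using that by auto
    then show ?thesis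
      using outside[of t] x_nonneg[of "t - 1"] stop V_pos \<open>t \<notin> {a..b}\<close> \<open>t - 1 \<in> {a..b}\<close>
      by (auto simp: ind_def)
  next
    assume "t - 1 \<notin> {a..b}" "t \<in> {a..b}"
    then have "t = a" "2 \<le> a"
      using that by auto
    then show ?thesis
      using outside[of "t - 1"] x_nonneg[of t] start V_pos \<open>t \<in> {a..b}\<close> \<open>t - 1 \<notin> {a..b}\<close>
      by (auto simp: ind_def)
  next
    assume "t - 1 \<notin> {a..b}" "t \<notin> {a..b}"
    then show ?thesis
      using outside[of t] outside[of "t - 1"] Cu_pos Cu_less_Vb by (auto simp: ind_def)
  qed
  show ?thesis
    unfolding inP_def Let_def fst_conv snd_conv
    using assms(1-3) outside range ramps x_nonneg by (auto simp: ind_def)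
qed

definition dip :: real where
  "dip = min V (Cb - Cu)"

text \<open>\<open>on_pt 0\<close> has no dip, since \<open>0\<close> lies outside the horizon.\<close>

definition on_pt :: "nat \<Rightarrow> pt" where
  "on_pt j = ((\<lambda>i. if i \<in> {1..T} then Cb - (if i = j then dip else 0) else 0), ind 1 T)"

definition ramp_up_pt :: "nat \<Rightarrow> nat \<Rightarrow> pt" where
  "ramp_up_pt k n = ((\<lambda>i. if i \<in> {k..T} then Vb + real (min (i - k) n) * V else 0), ind k T)"

definition shut_down_pt :: "nat \<Rightarrow> pt" where
  "shut_down_pt m = ((\<lambda>i. Vb * ind 1 m i), ind 1 m)"

lemma on_pt_feasible: "feasible (on_pt j)"
  unfolding on_pt_def
proof (rule block_feasible)
  show "\<bar>(if i \<in> {1..T} then Cb - (if i = j then dip else 0) else 0)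
      - (if i - 1 \<in> {1..T} then Cb - (if i - 1 = j then dip else 0) else 0)\<bar> \<le> V"
    if "i \<in> {1<..T}" for i
    using that V_pos Cu_less_Cb by (auto simp: dip_def)
qed (use Cu_less_Cb V_pos in \<open>auto simp: dip_def\<close>)

lemma ramp_up_pt_feasible:
  assumes "1 \<le> k" "real n * V \<le> Cb - Vb"
  shows "feasible (ramp_up_pt k n)"
  unfolding ramp_up_pt_def
proof (rule block_feasible)
  have range: "Cu \<le> Vb + real (min (i - k) n) * V \<and> Vb + real (min (i - k) n) * V \<le> Cb" for i
  proof -
    have "real (min (i - k) n) * V \<le> real n * V"
      using V_pos by (intro mult_right_mono) auto
    moreover have "0 \<le> real (min (i - k) n) * V"
      using V_pos by simp
    ultimately show ?thesis
      using assms(2) Cu_less_Vb by linarith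
  qed
  then show "Cu \<le> (if i \<in> {k..T} then Vb + real (min (i - k) n) * V else 0) \<and>
      (if i \<in> {k..T} then Vb + real (min (i - k) n) * V else 0) \<le> Cb" if "i \<in> {k..T}" for i
    using that by simp
  show "\<bar>(if i \<in> {k..T} then Vb + real (min (i - k) n) * V else 0)
      - (if i - 1 \<in> {k..T} then Vb + real (min (i - 1 - k) n) * V else 0)\<bar> \<le> V"
    if "i \<in> {k<..T}" for i
  proof -
    have "min (i - k) n = min (i - 1 - k) n \<or> min (i - k) n = Suc (min (i - 1 - k) n)"
      using that by auto
    then show ?thesis
      using that V_pos by (auto simp: algebra_simps)
  qed
qed (use assms(1) Cu_pos Cu_less_Vb in auto)

lemma shut_down_pt_feasible:
  assumes "m \<le> T"
  shows "feasible (shut_down_pt m)"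
  unfolding shut_down_pt_def
  by (rule block_feasible) (use assms Cu_pos Cu_less_Vb Vb_V_le_Cb V_pos in \<open>auto simp: ind_def\<close>)

lemma shut_down_pt_0: "shut_down_pt 0 = 0"
  by (simp add: shut_down_pt_def ind_def zero_prod_def fun_eq_iff)

lemma on_pt_diff:
  assumes "i \<in> {1..T}"
  shows "on_pt 0 - on_pt i = dip *\<^sub>R (ind i i, 0)"
  using assms by (auto simp: on_pt_def ind_same scaleR_fun_def)

lemma ramp_up_bound:
  assumes p: "feasible p" and "2 \<le> \<tau>" "\<tau> + m \<le> T"
    and off: "snd p (\<tau> - 1) = 0" and on: "\<And>j. j < m \<Longrightarrow> snd p (\<tau> + j) = 1"
  shows "fst p (\<tau> + m) \<le> Vb + real m * V"
  using assms(3) on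
proof (induction m)
  case 0
  have "fst p \<tau> - fst p (\<tau> - 1) \<le> V * snd p (\<tau> - 1) + Vb * (1 - snd p (\<tau> - 1))"
    using inPD(6)[OF p, of \<tau>] assms(2) 0 by simp
  moreover have "\<tau> - 1 \<in> {1..T}"
    using assms(2) 0 by auto
  then have "fst p (\<tau> - 1) \<le> Cb * snd p (\<tau> - 1)"
    using inPD(5)[OF p] by blast
  ultimately show ?case
    using off by simp
next
  case (Suc m)
  have "fst p (\<tau> + m) \<le> Vb + real m * V"
    using Suc by simp
  moreover have "fst p (\<tau> + Suc m) - fst p (\<tau> + m) \<le> V * snd p (\<tau> + m) + Vb * (1 - snd p (\<tau> + m))"
    using inPD(6)[OF p, of "\<tau> + Suc m"] assms(2) Suc.prems by simp
  moreover have "snd p (\<tau> + m) = 1"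
    using Suc.prems by simp
  ultimately show ?case
    by (simp add: algebra_simps)
qed

lemma min_up_run:
  assumes p: "feasible p" and "2 \<le> u" "u \<le> v" "v < T"
    and "snd p (u - 1) = 0" "snd p u = 1" "snd p (Suc v) = 0"
  shows "u + L \<le> Suc v"
proof (rule ccontr)
  assume "\<not> u + L \<le> Suc v"
  then have "u \<in> {2..T}" "Suc v \<in> {u..min T (u + L - 1)}"
    using assms(2-4) by auto
  then have "- snd p (u - 1) + snd p u - snd p (Suc v) \<le> 0"
    by (rule inPD(3)[OF p])
  then show False
    using assms(5-7) by simp
qed

lemma x_unit_in_span:
  assumes "i \<in> {1..T}" "on_pt 0 \<in> A" "on_pt i \<in> A"
  shows "(ind i i, 0) \<in> span A"
proof -
  have "(1 / dip) *\<^sub>R (on_pt 0 - on_pt i) \<in> span A"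
    using assms(2,3) by (intro real_vector.span_scale real_vector.span_diff real_vector.span_base)
  moreover have "dip \<noteq> 0"
    using V_pos Cu_less_Cb by (simp add: dip_def)
  ultimately show ?thesis
    using on_pt_diff[OF assms(1)] by simp
qed

lemma feasible_in_conv_P: "feasible p \<Longrightarrow> p \<in> conv_P"
  by (rule hull_inc) (simp add: Pset_def)

lemma conv_P_subset_horizon: "conv_P \<subseteq> horizon T"
proof -
  have "Pset T L l Cb Cu V Vb \<subseteq> horizon T"
    by (auto simp: Pset_def horizon_def dest: inPD(1))
  moreover have "convex (horizon T)"
    by (rule subspace_imp_convex[OF subspace_horizon])
  ultimately show ?thesis
    by (rule hull_minimal)
qed

lemma reflect_conv_P: "reflect_pt T ` conv_P = conv_P"
proof -
  have "reflect_pt T ` Pset T L l Cb Cu V Vb = Pset T L l Cb Cu V Vb"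
  proof (intro equalityI subsetI)
    fix q assume "q \<in> reflect_pt T ` Pset T L l Cb Cu V Vb"
    then show "q \<in> Pset T L l Cb Cu V Vb"
      by (auto simp: Pset_def inP_reflect_pt)
  next
    fix q assume "q \<in> Pset T L l Cb Cu V Vb"
    then have "reflect_pt T q \<in> Pset T L l Cb Cu V Vb"
      by (simp add: Pset_def inP_reflect_pt)
    then show "q \<in> reflect_pt T ` Pset T L l Cb Cu V Vb"
      by (metis image_eqI reflect_pt_involution)
  qed
  then show ?thesis
    by (simp add: convex_hull_linear_image[OF linear_reflect_pt])
qed

end

section \<open>The ramp inequalities\<close>

locale ramp_facet = unit_commitment +
  fixes \<alpha> \<beta> smax :: nat
  assumes smax_le_T: "smax + 2 \<le> T"
    and smax_ramp: "real smax * V \<le> Cb - Vb"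
    and \<alpha>_less_\<beta>: "\<alpha> < \<beta>" and \<beta>_le_smax: "\<beta> \<le> smax"
    and gap: "\<beta> = \<alpha> + 1 \<or> smax \<le> L + \<alpha>"
begin

definition lags :: "nat set" where
  "lags = {0..\<alpha>} \<union> {\<beta>..smax}"

definition headroom :: "nat \<Rightarrow> real" where
  "headroom s = Cb - Vb - real s * V"

definition rhs_up :: "nat \<Rightarrow> pt \<Rightarrow> real" where
  "rhs_up t p = Cb * snd p t - (\<Sum>s\<in>lags. headroom s * (snd p (t - s) - snd p (t - s - 1)))"

definition rhs_down :: "nat \<Rightarrow> pt \<Rightarrow> real" where
  "rhs_down t p = Cb * snd p t - (\<Sum>s\<in>lags. headroom s * (snd p (t + s) - snd p (t + s + 1)))"

lemma lags_subset: "lags \<subseteq> {0..smax}"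
  using \<alpha>_less_\<beta> \<beta>_le_smax by (auto simp: lags_def)

lemma finite_lags: "finite lags"
  by (simp add: lags_def)

lemma headroom_antimono: "s \<le> s' \<Longrightarrow> headroom s' \<le> headroom s"
  using V_pos by (simp add: headroom_def mult_right_mono)

lemma headroom_nonneg: "s \<le> smax \<Longrightarrow> 0 \<le> headroom s"
  using headroom_antimono[of s smax] smax_ramp by (simp add: headroom_def)

text \<open>This is where condition (c) enters.\<close>

lemma lags_closed_below:
  assumes "r \<in> lags" "\<rho> + L \<le> r"
  shows "\<rho> \<in> lags"
proof (rule ccontr)
  assume "\<rho> \<notin> lags"
  moreover have "r \<le> smax"
    using assms(1) lags_subset by auto
  ultimately have "\<alpha> < \<rho>" "\<rho> < \<beta>"
    using assms(2) by (auto simp: lags_def)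
  then show False
    using gap assms(2) \<open>r \<le> smax\<close> by auto
qed

lemma sum_lags_eq:
  "(\<Sum>s\<in>lags. headroom s * f s) = (\<Sum>s\<in>{0..smax}. (if s \<in> lags then headroom s else 0) * f s)"
proof -
  have "(\<Sum>s\<in>{0..smax}. (if s \<in> lags then headroom s else 0) * f s)
      = (\<Sum>s\<in>{0..smax} \<inter> lags. headroom s * f s)"
    by (simp add: sum.inter_restrict if_distrib[of "\<lambda>z. z * _"] cong: if_cong)
  also have "{0..smax} \<inter> lags = lags"
    using lags_subset by blast
  finally show ?thesis ..
qed

lemma linear_rhs_up: "linear (\<lambda>p. fst p t - rhs_up t p)"
  unfolding rhs_up_def
  by (rule linearI) (auto simp: scaleR_fun_def algebra_simps sum.distrib sum_distrib_left sum_subtractf)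

definition face_up :: "nat \<Rightarrow> pt set" where
  "face_up t = {p \<in> conv_P. fst p t = rhs_up t p}"

context
  fixes t assumes t: "t \<in> {smax + 2..T}"
begin

lemma run_length_before:
  assumes p: "feasible p" and "\<rho> < r" "r \<le> smax" "snd p (t - \<rho>) = 0"
    and "\<forall>j\<in>{\<rho><..r}. snd p (t - j) = 1" "snd p (t - Suc r) = 0"
  shows "\<rho> + L \<le> r"
proof -
  have "t - r + L \<le> Suc (t - Suc \<rho>)"
  proof (rule min_up_run[OF p])
    show "2 \<le> t - r" "t - r \<le> t - Suc \<rho>" "t - Suc \<rho> < T"
      using assms(2,3) t by auto
    show "snd p (t - r - 1) = 0" "snd p (t - r) = 1"
      using assms(2,5,6) by simp_all
    show "snd p (Suc (t - Suc \<rho>)) = 0"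
      using assms(2-4) t by (simp add: Suc_diff_Suc)
  qed
  then show ?thesis
    using assms(2,3) t by auto
qed

lemma ramp_before:
  assumes p: "feasible p" and "r \<le> smax" "\<forall>j\<in>{0..r}. snd p (t - j) = 1" "snd p (t - Suc r) = 0"
  shows "fst p t \<le> Cb - headroom r"
proof -
  have "fst p (t - r + r) \<le> Vb + real r * V"
  proof (rule ramp_up_bound[OF p])
    show "2 \<le> t - r" "t - r + r \<le> T"
      using assms(2) t by auto
    show "snd p (t - r - 1) = 0"
      using assms(4) by simp
    show "snd p (t - r + j) = 1" if "j < r" for j
    proof -
      have "t - r + j = t - (r - j)"
        using \<open>j < r\<close> assms(2) t by auto
      moreover have "snd p (t - (r - j)) = 1"
        using assms(3) by simp
      ultimately show ?thesis
        by (simp only:)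
    qed
  qed
  then show ?thesis
    using assms(2) t by (simp add: headroom_def)
qed

lemma rhs_up_valid:
  assumes p: "feasible p"
  shows "fst p t \<le> rhs_up t p"
proof -
  define Y where "Y s = snd p (t - s)" for s
  define cc where "cc s = (if s \<in> lags then headroom s else 0)" for s
  have binary: "Y s = 0 \<or> Y s = 1" if "s \<le> Suc smax" for s
  proof -
    have "t - s \<in> {1..T}"
      using that t by auto
    then show ?thesis
      using inPD(2)[OF p] by (simp add: Y_def)
  qed
  have cc_nonneg: "0 \<le> cc s" if "s \<le> smax" for s
    using headroom_nonneg[OF that] by (simp add: cc_def)
  have cc_run: "cc r \<le> cc \<rho>"
    if "\<rho> < r" "r \<le> smax" "Y \<rho> = 0" "\<forall>j\<in>{\<rho><..r}. Y j = 1" "Y (Suc r) = 0" for \<rho> r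
  proof -
    have "\<rho> + L \<le> r"
      using run_length_before[OF p] that by (simp add: Y_def)
    then show ?thesis
      using lags_closed_below[of r \<rho>] headroom_antimono[of \<rho> r] cc_nonneg[of \<rho>] that(1,2)
      by (auto simp: cc_def)
  qed
  have first_run: "cc r \<le> Cb * Y 0 - fst p t"
    if "r \<le> smax" "\<forall>j\<in>{0..r}. Y j = 1" "Y (Suc r) = 0" for r
  proof -
    have "fst p t \<le> Cb - headroom r"
      using ramp_before[OF p] that by (simp add: Y_def)
    moreover have "Y 0 = 1"
      using that(2) by simp
    ultimately show ?thesis
      using headroom_nonneg[OF that(1)] by (simp add: cc_def)
  qed
  have B_nonneg: "0 \<le> Cb * Y 0 - fst p t"
    using inPD(5)[OF p, of t] t by (simp add: Y_def)
  have "(\<Sum>s\<in>lags. headroom s * (snd p (t - s) - snd p (t - s - 1)))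
      = (\<Sum>s\<in>{0..smax}. cc s * (Y s - Y (Suc s)))"
    unfolding sum_lags_eq by (simp add: cc_def Y_def)
  moreover have "(\<Sum>s\<in>{0..smax}. cc s * (Y s - Y (Suc s))) \<le> Cb * Y 0 - fst p t"
    by (rule switch_sum_le[OF binary cc_nonneg cc_run B_nonneg first_run])
  moreover have "Cb * Y 0 = Cb * snd p t"
    by (simp add: Y_def)
  ultimately show ?thesis
    unfolding rhs_up_def by linarith
qed

lemma rhs_up_block:
  assumes "a \<le> Suc b"
  shows "rhs_up t (x, ind a b) = Cb * ind a b t
    - ((if a \<le> t \<and> t - a \<in> lags then headroom (t - a) else 0)
      - (if b < t \<and> t - Suc b \<in> lags then headroom (t - Suc b) else 0))"
proof -
  have "\<forall>s\<in>lags. s < t"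
    using lags_subset t by auto
  then show ?thesis
    unfolding rhs_up_def using sum_ind_increments[OF finite_lags _ assms] by simp
qed

lemma pred_notin_lags: "t - 1 \<notin> lags"
  using lags_subset t by auto

lemma on_pt_in_face: "j \<noteq> t \<Longrightarrow> on_pt j \<in> face_up t"
  using feasible_in_conv_P[OF on_pt_feasible] rhs_up_block[of 1 T] pred_notin_lags t
  by (simp add: face_up_def on_pt_def ind_def)

lemma late_start_in_face:
  assumes "t < k" "k \<le> T"
  shows "ramp_up_pt k 0 \<in> face_up t"
  using feasible_in_conv_P[OF ramp_up_pt_feasible] rhs_up_block[of k T] assms t Vb_V_le_Cb V_pos
  by (simp add: face_up_def ramp_up_pt_def ind_def)

lemma lagged_start_in_face:
  assumes "s \<in> lags"
  shows "ramp_up_pt (t - s) s \<in> face_up t"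
proof -
  have "s \<le> smax"
    using assms lags_subset by auto
  then have start: "1 \<le> t - s" "t - s \<le> T" "t - (t - s) = s"
    using t by auto
  have "real s * V \<le> real smax * V"
    using \<open>s \<le> smax\<close> V_pos by (simp add: mult_right_mono)
  then have "ramp_up_pt (t - s) s \<in> conv_P"
    using smax_ramp by (intro feasible_in_conv_P ramp_up_pt_feasible start(1)) simp
  moreover have "fst (ramp_up_pt (t - s) s) t = Vb + real s * V"
    using start t by (simp add: ramp_up_pt_def)
  moreover have "rhs_up t (ramp_up_pt (t - s) s) = Vb + real s * V"
    using rhs_up_block[of "t - s" T] start assms t by (simp add: ramp_up_pt_def ind_def headroom_def)
  ultimately show ?thesis
    by (simp add: face_up_def)
qed

lemma early_shut_down_in_face:
  assumes "m < t" "t - Suc m \<notin> lags"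
  shows "shut_down_pt m \<in> face_up t"
  using feasible_in_conv_P[OF shut_down_pt_feasible] rhs_up_block[of 1 m] assms t pred_notin_lags
  by (simp add: face_up_def shut_down_pt_def ind_def)

lemma zero_in_face: "0 \<in> face_up t"
  using early_shut_down_in_face[of 0] pred_notin_lags t by (simp add: shut_down_pt_0)

lemma face_profile_in_subspace:
  assumes U: "subspace U" "face_up t \<subseteq> U" "\<And>i. i \<in> {1..T} \<Longrightarrow> (ind i i, 0) \<in> U"
    and q: "q \<in> face_up t"
  shows "(0, snd q) \<in> U"
proof (rule snd_part_in_subspace[OF U(1,3)])
  show "q \<in> U" "q \<in> horizon T"
    using q U(2) conv_P_subset_horizon by (auto simp: face_up_def)
qed

lemma on_from_in_subspace:
  assumes U: "subspace U" "face_up t \<subseteq> U" "\<And>i. i \<in> {1..T} \<Longrightarrow> (ind i i, 0) \<in> U"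
    and k: "1 \<le> k" "k \<le> Suc T"
  shows "(0, ind k T) \<in> U"
proof -
  have profile: "(0, snd q) \<in> U" if "q \<in> face_up t" for q
    by (rule face_profile_in_subspace[OF U(1,2)]) (use U(3) that in auto)
  consider "t < k" "k \<le> T" | "k = Suc T" | "k \<le> t" "t - k \<in> lags" | "k \<le> t" "t - k \<notin> lags"
    using k by (cases "k \<le> t") (auto simp: not_le le_Suc_eq)
  then show ?thesis
  proof cases
    case 1
    then show ?thesis
      using profile[OF late_start_in_face] by (simp add: ramp_up_pt_def)
  next
    case 2
    then have "ind k T = 0"
      by (simp add: ind_def fun_eq_iff)
    then show ?thesis
      using real_vector.subspace_0[OF U(1)] by (simp add: zero_prod_def)
  next
    case 3
    then show ?thesis
      using profile[OF lagged_start_in_face[of "t - k"]] by (simp add: ramp_up_pt_def)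
  next
    case 4
    have "(0, ind 1 T) \<in> U"
      using profile[OF on_pt_in_face[of 0]] t by (simp add: on_pt_def)
    moreover have "(0, ind 1 (k - 1)) \<in> U"
      using profile[OF early_shut_down_in_face[of "k - 1"]] k 4 by (simp add: shut_down_pt_def)
    ultimately have "(0, ind 1 T) - (0, ind 1 (k - 1)) \<in> U"
      by (rule real_vector.subspace_diff[OF U(1)])
    moreover have "(0, ind 1 T) - (0, ind 1 (k - 1)) = ((0, ind k T) :: pt)"
      using k by (auto simp: ind_def prod_eq_iff fun_eq_iff)
    ultimately show ?thesis
      by simp
  qed
qed

lemma face_up_y_units:
  assumes U: "subspace U" "face_up t \<subseteq> U" "\<And>i. i \<in> {1..T} \<Longrightarrow> (ind i i, 0) \<in> U"
    and j: "j \<in> {1..T}"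
  shows "(0, ind j j) \<in> U"
proof -
  have "(0, ind j T) - (0, ind (Suc j) T) \<in> U"
    using j by (intro real_vector.subspace_diff[OF U(1)] on_from_in_subspace[OF U]) auto
  moreover have "(0, ind j T) - (0, ind (Suc j) T) = ((0, ind j j) :: pt)"
    using j by (auto simp: ind_def prod_eq_iff fun_eq_iff)
  ultimately show ?thesis
    by simp
qed

lemma horizon_subset_span_face: "horizon T \<subseteq> span (insert (ind t t, 0) (face_up t))"
proof -
  let ?U = "span (insert (ind t t, 0) (face_up t))"
  have x_units: "(ind i i, 0) \<in> ?U" if "i \<in> {1..T}" for i
  proof (cases "i = t")
    case True
    then show ?thesis
      by (simp add: real_vector.span_base)
  next
    case False
    then have "(ind i i, 0) \<in> span (face_up t)"
      using x_unit_in_span[OF that] on_pt_in_face t by auto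
    then show ?thesis
      using real_vector.span_mono[of "face_up t" "insert (ind t t, 0) (face_up t)"] by blast
  qed
  have "face_up t \<subseteq> ?U"
    using real_vector.span_superset by blast
  then show ?thesis
    using x_units face_up_y_units[OF real_vector.subspace_span]
    by (intro horizon_subset_subspace real_vector.subspace_span) auto
qed

lemma unit_notin_span_face: "(ind t t, 0) \<notin> span (face_up t)"
proof
  assume unit: "(ind t t, 0) \<in> span (face_up t)"
  have "fst (ind t t, 0 :: nat \<Rightarrow> real) t - rhs_up t (ind t t, 0) = 0"
    by (rule real_vector.linear_eq_0_on_span[OF linear_rhs_up _ unit]) (simp add: face_up_def)
  then show False
    by (simp add: rhs_up_def ind_def)
qed

lemma facet_up: "facet_defining conv_P (\<lambda>p. fst p t) (rhs_up t)"
proof -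
  have "affdim (face_up t) = affdim conv_P - 1"
  proof (rule affdim_codim_one)
    show "0 \<in> face_up t" "face_up t \<subseteq> conv_P"
      using zero_in_face by (auto simp: face_up_def)
    show "finite ((\<lambda>i. (ind i i, 0)) ` {1..T} \<union> (\<lambda>i. (0, ind i i)) ` {1..T})"
      by simp
    show "conv_P \<subseteq> span ((\<lambda>i. (ind i i, 0)) ` {1..T} \<union> (\<lambda>i. (0, ind i i)) ` {1..T})"
      using conv_P_subset_horizon horizon_subset_span_units by blast
    show "(ind t t, 0) \<in> span conv_P"
      using x_unit_in_span feasible_in_conv_P[OF on_pt_feasible] t by auto
    show "conv_P \<subseteq> span (insert (ind t t, 0) (face_up t))"
      using conv_P_subset_horizon horizon_subset_span_face by blast
  qed (rule unit_notin_span_face)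
  moreover have "valid_ineq conv_P (\<lambda>p. fst p t) (rhs_up t)"
    using rhs_up_valid by (intro valid_ineq_convex_hull linear_rhs_up) (simp add: Pset_def)
  ultimately show ?thesis
    by (simp add: facet_defining_def face_up_def)
qed

end

lemma facet_down:
  assumes t: "t \<in> {1..T - smax - 1}"
  shows "facet_defining conv_P (\<lambda>p. fst p t) (rhs_down t)"
proof -
  have t': "T + 1 - t \<in> {smax + 2..T}"
    using t smax_le_T by auto
  have "t \<in> {1..T}"
    using t by auto
  then have "T + 1 - t = reflect T t"
    by (simp add: reflect_def)
  then have "reflect T (T + 1 - t) = t"
    by simp
  have "facet_defining conv_P (\<lambda>p. fst (reflect_pt T p) (T + 1 - t)) (\<lambda>p. rhs_up (T + 1 - t) (reflect_pt T p))"
    by (rule facet_defining_linear_involution[OF linear_reflect_pt reflect_pt_involution reflect_conv_P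
          facet_up[OF t']])
  moreover have "fst (reflect_pt T p) (T + 1 - t) = fst p t" for p
    using \<open>reflect T (T + 1 - t) = t\<close> by (simp add: reflect_pt_def)
  moreover have "rhs_up (T + 1 - t) (reflect_pt T p) = rhs_down t p" for p
  proof -
    have "reflect T (T + 1 - t - s) = t + s" "reflect T (T + 1 - t - s - 1) = t + s + 1"
      if "s \<in> lags" for s
      using that lags_subset t smax_le_T by (auto simp: reflect_def)
    then show ?thesis
      using t by (auto simp: rhs_up_def rhs_down_def reflect_pt_def reflect_def intro!: sum.cong)
  qed
  ultimately show ?thesis
    by simp
qed

end

theorem proposition2:
  fixes T L l :: nat and Cb Cu V Vb :: real and \<alpha> \<beta> smax :: nat
  assumes "T > 0" "L > 0" "l > 0"
    and "Cb > Cu" "Cu > 0" "V > 0" "Vb + V \<le> Cb" "Cu < Vb" "Vb < Cu + V"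
    and "L \<le> smax" "int smax \<le> int T - 2" "int smax \<le> \<lfloor>(Cb - Vb) / V\<rfloor>"
    and "\<alpha> < \<beta>" "\<beta> \<le> smax"
    and "\<beta> = \<alpha> + 1 \<or> smax \<le> L + \<alpha>"
  defines "S \<equiv> {0..\<alpha>} \<union> {\<beta>..smax}"
    and "K \<equiv> convex hull (Pset T L l Cb Cu V Vb)"
  shows "(\<forall>t\<in>{smax + 2..T}.
           facet_defining K (\<lambda>p. fst p t)
             (\<lambda>p. Cb * snd p t - (\<Sum>s\<in>S. (Cb - Vb - real s * V) * (snd p (t - s) - snd p (t - s - 1)))))
       \<and> (\<forall>t\<in>{1..T - smax - 1}.
           facet_defining K (\<lambda>p. fst p t)
             (\<lambda>p. Cb * snd p t - (\<Sum>s\<in>S. (Cb - Vb - real s * V) * (snd p (t + s) - snd p (t + s + 1)))))"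
proof -
  have "real smax \<le> (Cb - Vb) / V"
    using assms(12) by (simp add: le_floor_iff)
  then have "real smax * V \<le> Cb - Vb"
    using assms(6) by (simp add: pos_le_divide_eq)
  then interpret ramp_facet T L l Cb Cu V Vb \<alpha> \<beta> smax
    using assms(4-8,11,13-15) by unfold_locales auto
  have "rhs_up t = (\<lambda>p. Cb * snd p t - (\<Sum>s\<in>S. (Cb - Vb - real s * V) * (snd p (t - s) - snd p (t - s - 1))))"
    "rhs_down t = (\<lambda>p. Cb * snd p t - (\<Sum>s\<in>S. (Cb - Vb - real s * V) * (snd p (t + s) - snd p (t + s + 1))))"
    for t
    by (simp_all add: fun_eq_iff rhs_up_def rhs_down_def headroom_def lags_def S_def)
  then show ?thesis
    using facet_up facet_down unfolding K_def by simp
qed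

end
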